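(* Let $s=(s_1,\dots,s_m)$ be a sequence of positive integers. Then the $s$-permutahedron (the Hasse diagram of the $s$-weak order on $s$-decreasing trees) has a Hamilton path, i.e., there is a listing of all $s$-decreasing trees, each exactly once, in which every two consecutive trees form a cover relation of the $s$-weak order.
   Context: Let $s=(s_1,\dots,s_m)$ be a sequence of positive integers. An $s$-decreasing tree is a rooted plane tree with $m$ internal nodes labelled $1,\dots,m$ (together with unlabelled leaves) such that the internal node labelled $i$ has exactly $s_i+1$ children, ordered from left to right and indexed $0,1,\dots,s_i$, and labels strictly decrease along every path from the root (so the root is labelled $m$). For an $s$-decreasing tree $T$ and labels $a<b$, the tree-inversion number $\#_T(b,a)$ is defined as: $0$ if $a$ lies to the left of $b$ or in the subtree of the child of $b$ with index $0$; $i$ if $a$ lies in the subtree of the child of $b$ with index $i$ ($0\le i\le s_b$); and $s_b$ if $a$ lies to the right of $b$. The $s$-weak order is the partial order on $s$-decreasing trees given by $T\le T'$ iff $\#_T(b,a)\le \#_{T'}(b,a)$ for all $1\le a<b\le m$. The $s$-permutahedron is the graph whose vertices are the $s$-decreasing trees and whose edges are the cover relations of the $s$-weak order. *)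

theory Defs
  imports Main
begin

text \<open>Rooted plane trees: unlabelled leaves and internal nodes carrying a label
  and an ordered list of children (child index = position in the list, starting at 0).\<close>
datatype ptree = Leaf | Node nat "ptree list"

text \<open>Internal nodes of a tree, each with its address: the list of child indices
  on the path from the root to the node.\<close>
fun nodes :: "ptree \<Rightarrow> (nat \<times> nat list) list"
  and nodesl :: "nat \<Rightarrow> ptree list \<Rightarrow> (nat \<times> nat list) list" where
  "nodes Leaf = []"
| "nodes (Node i ts) = (i, []) # nodesl 0 ts"
| "nodesl j [] = []"
| "nodesl j (t # ts) = map (\<lambda>(l, p). (l, j # p)) (nodes t) @ nodesl (Suc j) ts"

definition labels :: "ptree \<Rightarrow> nat list" where
  "labels T = map fst (nodes T)"

text \<open>The sequence s = (s_1,...,s_m) is a list; s_i = s ! (i - 1), m = length s.\<close>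
definition sval :: "nat list \<Rightarrow> nat \<Rightarrow> nat" where
  "sval s i = s ! (i - 1)"

fun sdec_shape :: "nat list \<Rightarrow> ptree \<Rightarrow> bool" where
  "sdec_shape s Leaf = True"
| "sdec_shape s (Node i ts) =
     (length ts = sval s i + 1 \<and>
      (\<forall>t \<in> set ts. sdec_shape s t \<and> (\<forall>l \<in> set (labels t). l < i)))"

definition s_decreasing_tree :: "nat list \<Rightarrow> ptree \<Rightarrow> bool" where
  "s_decreasing_tree s T \<longleftrightarrow>
     sdec_shape s T \<and> distinct (labels T) \<and> set (labels T) = {1..length s}"

definition pos :: "ptree \<Rightarrow> nat \<Rightarrow> nat list" where
  "pos T a = (THE p. (a, p) \<in> set (nodes T))"

definition left_of :: "nat list \<Rightarrow> nat list \<Rightarrow> bool" where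
  "left_of pa pb \<longleftrightarrow> (\<exists>q x y ra rb. pa = q @ x # ra \<and> pb = q @ y # rb \<and> x < y)"

definition tree_inv :: "nat list \<Rightarrow> ptree \<Rightarrow> nat \<Rightarrow> nat \<Rightarrow> nat" where
  "tree_inv s T b a =
     (let pa = pos T a; pb = pos T b in
      if \<exists>c r. pa = pb @ c # r then pa ! length pb
      else if left_of pa pb then 0
      else sval s b)"

definition s_weak_le :: "nat list \<Rightarrow> ptree \<Rightarrow> ptree \<Rightarrow> bool" where
  "s_weak_le s T T' \<longleftrightarrow>
     (\<forall>a b. 1 \<le> a \<and> a < b \<and> b \<le> length s \<longrightarrow> tree_inv s T b a \<le> tree_inv s T' b a)"

definition s_weak_cover :: "nat list \<Rightarrow> ptree \<Rightarrow> ptree \<Rightarrow> bool" where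
  "s_weak_cover s T T' \<longleftrightarrow>
     s_decreasing_tree s T \<and> s_decreasing_tree s T' \<and>
     s_weak_le s T T' \<and> T \<noteq> T' \<and>
     \<not> (\<exists>U. s_decreasing_tree s U \<and> s_weak_le s T U \<and> s_weak_le s U T' \<and> U \<noteq> T \<and> U \<noteq> T')"

definition s_perm_edge :: "nat list \<Rightarrow> ptree \<Rightarrow> ptree \<Rightarrow> bool" where
  "s_perm_edge s T T' \<longleftrightarrow> s_weak_cover s T T' \<or> s_weak_cover s T' T"

end

theory Submission
  imports Defs
begin

text \<open>Induction on \<open>m\<close>, peeling off the label \<open>1\<close>. As labels decrease away from the root,
  the node labelled \<open>1\<close> is a cherry: all its \<open>s\<^sub>1 + 1\<close> children are leaves. Removing it
  and lowering the other labels by one gives an \<open>(s\<^sub>2, \<dots>, s\<^sub>m)\<close>-decreasing tree \<open>t\<close>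
  together with a leaf of \<open>t\<close>, and every such pair arises exactly once. The grafted tree
  has the tree-inversions of \<open>t\<close> among the old labels, while \<open>#(b + 1, 1)\<close> is the position
  of the chosen leaf relative to the node \<open>b\<close> of \<open>t\<close>. Sweeping through the leaves of \<open>t\<close>
  from left to right raises exactly one of these numbers by one at each step, from all \<open>0\<close>
  at the first leaf to all maximal at the last, so consecutive leaves give cover relations.

  A Hamilton path \<open>t\<^sub>1, t\<^sub>2, \<dots>\<close> of the smaller permutahedron is then lifted
  boustrophedon-wise: the leaves of \<open>t\<^sub>1\<close> left to right, those of \<open>t\<^sub>2\<close> right to left,
  and so on. Consecutive blocks meet at two first or two last leaves, whose inversion
  vectors agree, so the cover relation between \<open>t\<^sub>i\<close> and \<open>t\<^sub>i\<^sub>+\<^sub>1\<close> lifts to one there.\<close>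

section \<open>Addresses and inversion numbers\<close>

lemma left_of_Cons_Cons [simp]: "left_of (a # p) (b # q) \<longleftrightarrow> a < b \<or> (a = b \<and> left_of p q)"
proof
  assume "left_of (a # p) (b # q)"
  then obtain r x y ra rb where "a # p = r @ x # ra" "b # q = r @ y # rb" "x < y"
    by (auto simp: left_of_def)
  then show "a < b \<or> (a = b \<and> left_of p q)"
    by (cases r) (auto simp: left_of_def)
next
  assume "a < b \<or> (a = b \<and> left_of p q)"
  then show "left_of (a # p) (b # q)"
  proof
    assume "a < b"
    then show ?thesis
      unfolding left_of_def by (rule_tac x="[]" in exI) auto
  next
    assume "a = b \<and> left_of p q"
    then obtain r x y ra rb where "p = r @ x # ra" "q = r @ y # rb" "x < y" "a = b"
      by (auto simp: left_of_def)
    then show ?thesis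
      unfolding left_of_def by (rule_tac x="a # r" in exI) auto
  qed
qed

text \<open>The tree-inversion number as a function of addresses only: the node at address \<open>q\<close>
  with \<open>m + 1\<close> children against the position \<open>p\<close>.\<close>
definition addr_inv :: "nat \<Rightarrow> nat list \<Rightarrow> nat list \<Rightarrow> nat" where
  "addr_inv m q p = (if \<exists>c r. p = q @ c # r then p ! length q else if left_of p q then 0 else m)"

lemma tree_inv_eq_addr_inv: "tree_inv s T b a = addr_inv (sval s b) (pos T b) (pos T a)"
  by (simp add: tree_inv_def addr_inv_def)

lemma addr_inv_Nil_Cons [simp]: "addr_inv m [] (c # r) = c"
  by (simp add: addr_inv_def)

lemma addr_inv_Cons_Cons [simp]: "addr_inv m (c # q) (c # p) = addr_inv m q p"
  by (simp add: addr_inv_def)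

lemma addr_inv_Cons_less: "d < c \<Longrightarrow> addr_inv m (c # q) (d # p) = 0"
  by (simp add: addr_inv_def)

lemma addr_inv_Cons_greater: "c < d \<Longrightarrow> addr_inv m (c # q) (d # p) = m"
  by (simp add: addr_inv_def)

section \<open>Sweeping through the leaves\<close>

fun leaves :: "ptree \<Rightarrow> nat list list"
  and leavesl :: "nat \<Rightarrow> ptree list \<Rightarrow> nat list list" where
  "leaves Leaf = [[]]"
| "leaves (Node i ts) = leavesl 0 ts"
| "leavesl j [] = []"
| "leavesl j (t # ts) = map (Cons j) (leaves t) @ leavesl (Suc j) ts"

lemma set_nodesl:
  "set (nodesl j ts) = {(l, c # q) | l c q. j \<le> c \<and> c < j + length ts \<and> (l, q) \<in> set (nodes (ts ! (c - j)))}"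
proof (induction ts arbitrary: j)
  case (Cons t ts)
  show ?case
  proof (intro set_eqI iffI)
    fix x assume "x \<in> set (nodesl j (t # ts))"
    then show "x \<in> {(l, c # q) | l c q. j \<le> c \<and> c < j + length (t # ts) \<and> (l, q) \<in> set (nodes ((t # ts) ! (c - j)))}"
      using Cons by (auto simp: Suc_diff_le)
  next
    fix x assume "x \<in> {(l, c # q) | l c q. j \<le> c \<and> c < j + length (t # ts) \<and> (l, q) \<in> set (nodes ((t # ts) ! (c - j)))}"
    then obtain l c q where x: "x = (l, c # q)" "j \<le> c" "c < j + length (t # ts)"
      "(l, q) \<in> set (nodes ((t # ts) ! (c - j)))" by blast
    show "x \<in> set (nodesl j (t # ts))"
    proof (cases "c = j")
      case False
      then have "c - j = Suc (c - Suc j)" using x by auto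
      then show ?thesis using x False Cons by auto
    qed (use x in force)
  qed
qed simp

lemma set_leavesl:
  "set (leavesl j ts) = {c # q | c q. j \<le> c \<and> c < j + length ts \<and> q \<in> set (leaves (ts ! (c - j)))}"
proof (induction ts arbitrary: j)
  case (Cons t ts)
  show ?case
  proof (intro set_eqI iffI)
    fix x assume "x \<in> set (leavesl j (t # ts))"
    then show "x \<in> {c # q | c q. j \<le> c \<and> c < j + length (t # ts) \<and> q \<in> set (leaves ((t # ts) ! (c - j)))}"
      using Cons by (auto simp: Suc_diff_le)
  next
    fix x assume "x \<in> {c # q | c q. j \<le> c \<and> c < j + length (t # ts) \<and> q \<in> set (leaves ((t # ts) ! (c - j)))}"
    then obtain c q where x: "x = c # q" "j \<le> c" "c < j + length (t # ts)"
      "q \<in> set (leaves ((t # ts) ! (c - j)))" by blast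
    show "x \<in> set (leavesl j (t # ts))"
    proof (cases "c = j")
      case False
      then have "c - j = Suc (c - Suc j)" using x by auto
      then show ?thesis using x False Cons by auto
    qed (use x in force)
  qed
qed simp

lemma set_nodes_Node:
  "set (nodes (Node i ts)) = insert (i, []) {(l, c # q) | l c q. c < length ts \<and> (l, q) \<in> set (nodes (ts ! c))}"
  by (simp add: set_nodesl)

lemma in_set_nodeslD: "(l, p) \<in> set (nodesl j ts) \<Longrightarrow> \<exists>c q. p = c # q \<and> j \<le> c \<and> c < j + length ts"
  by (auto simp: set_nodesl)

lemma set_nodesl_Cons: "set (nodesl j (t # ts)) = (\<lambda>(l, p). (l, j # p)) ` set (nodes t) \<union> set (nodesl (Suc j) ts)"
  by auto

lemma labels_Leaf [simp]: "labels Leaf = []"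
  by (simp add: labels_def)

lemma set_labels_Node: "set (labels (Node i ts)) = insert i (\<Union>t\<in>set ts. set (labels t))"
proof -
  have "set (labels (Node i ts)) = insert i (\<Union>c<length ts. fst ` set (nodes (ts ! c)))"
    unfolding labels_def set_map set_nodes_Node by force
  also have "(\<Union>c<length ts. fst ` set (nodes (ts ! c))) = (\<Union>t\<in>set ts. set (labels t))"
  proof -
    have "set ts = (\<lambda>c. ts ! c) ` {..<length ts}"
      by (auto simp: in_set_conv_nth image_def)
    then show ?thesis by (simp add: labels_def)
  qed
  finally show ?thesis .
qed

fun has_arity :: "(nat \<Rightarrow> nat) \<Rightarrow> ptree \<Rightarrow> bool" where
  "has_arity f Leaf = True"
| "has_arity f (Node i ts) = (length ts = f i + 1 \<and> (\<forall>t\<in>set ts. has_arity f t))"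

lemma sdec_shape_has_arity: "sdec_shape s T \<Longrightarrow> has_arity (sval s) T"
  by (induction T) auto

lemma addr_inv_append_Cons [simp]: "addr_inv m q (q @ c # r) = c"
  by (simp add: addr_inv_def)

lemma leaves_hd_last:
  shows "has_arity f T \<Longrightarrow> leaves T \<noteq> [] \<and>
      (\<forall>(l, q)\<in>set (nodes T). addr_inv (f l) q (hd (leaves T)) = 0 \<and> addr_inv (f l) q (last (leaves T)) = f l)"
    and "\<forall>t\<in>set ts. has_arity f t \<Longrightarrow> ts \<noteq> [] \<Longrightarrow> leavesl j ts \<noteq> [] \<and>
      (\<exists>r. hd (leavesl j ts) = j # r) \<and> (\<exists>r. last (leavesl j ts) = (j + length ts - 1) # r) \<and>
      (\<forall>(l, q)\<in>set (nodesl j ts). addr_inv (f l) q (hd (leavesl j ts)) = 0 \<and>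
                                  addr_inv (f l) q (last (leavesl j ts)) = f l)"
proof (induction T and j ts rule: nodes_nodesl.induct)
  case (2 i ts)
  then have "length ts - 1 = f i" "ts \<noteq> []" by auto
  with 2 show ?case by auto
next
  case (4 j t ts)
  then have lt: "leaves t \<noteq> []"
    and t: "\<forall>(l, q)\<in>set (nodes t). addr_inv (f l) q (hd (leaves t)) = 0 \<and> addr_inv (f l) q (last (leaves t)) = f l"
    by auto
  have hd: "hd (leavesl j (t # ts)) = j # hd (leaves t)"
    using lt by (simp add: hd_map)
  show ?case
  proof (cases "ts = []")
    case True
    then show ?thesis using lt t by (auto simp: last_map hd_map)
  next
    case False
    with 4 obtain r where ts: "leavesl (Suc j) ts \<noteq> []"
      "last (leavesl (Suc j) ts) = (Suc j + length ts - 1) # r"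
      "\<forall>(l, q)\<in>set (nodesl (Suc j) ts). addr_inv (f l) q (hd (leavesl (Suc j) ts)) = 0 \<and>
                                           addr_inv (f l) q (last (leavesl (Suc j) ts)) = f l"
      by auto
    have last: "last (leavesl j (t # ts)) = last (leavesl (Suc j) ts)"
      using ts(1) by simp
    have "addr_inv (f l) q (hd (leavesl j (t # ts))) = 0 \<and> addr_inv (f l) q (last (leavesl j (t # ts))) = f l"
      if "(l, q) \<in> set (nodesl (Suc j) ts)" for l q
      using that hd last ts(3) in_set_nodeslD[OF that] by (auto simp: addr_inv_Cons_less)
    then show ?thesis
      using t hd last ts(2) False by (auto simp: addr_inv_Cons_greater)
  qed
qed auto

lemma leaves_not_Nil: "has_arity f T \<Longrightarrow> leaves T \<noteq> []"
  using leaves_hd_last(1) by blast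

definition inv_step :: "(nat \<Rightarrow> nat) \<Rightarrow> (nat \<times> nat list) set \<Rightarrow> nat list \<Rightarrow> nat list \<Rightarrow> bool" where
  "inv_step f N p p' \<longleftrightarrow>
     (\<exists>e\<in>N. \<forall>(l, q)\<in>N. addr_inv (f l) q p' = addr_inv (f l) q p + (if (l, q) = e then 1 else 0))"

definition inv_same :: "(nat \<Rightarrow> nat) \<Rightarrow> (nat \<times> nat list) set \<Rightarrow> nat list \<Rightarrow> nat list \<Rightarrow> bool" where
  "inv_same f N p p' \<longleftrightarrow> (\<forall>(l, q)\<in>N. addr_inv (f l) q p' = addr_inv (f l) q p)"

text \<open>Consecutive leaves of a forest whose trees hang at child indices \<open>j, j + 1, \<dots>\<close>: either
  they lie in the same tree, or they are the last leaf of one tree and the first leaf of the next.\<close>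
definition forest_step :: "(nat \<Rightarrow> nat) \<Rightarrow> nat \<Rightarrow> ptree list \<Rightarrow> nat list \<Rightarrow> nat list \<Rightarrow> bool" where
  "forest_step f j ts p p' \<longleftrightarrow> (\<exists>c r c' r'. p = c # r \<and> p' = c' # r' \<and> j \<le> c \<and>
     (c' = c \<and> inv_step f (set (nodesl j ts)) p p' \<or> c' = Suc c \<and> inv_same f (set (nodesl j ts)) p p'))"

lemma inv_same_Un [simp]: "inv_same f (M \<union> N) p p' \<longleftrightarrow> inv_same f M p p' \<and> inv_same f N p p'"
  by (auto simp: inv_same_def)

lemma inv_step_Un:
  assumes "inv_same f M p p'" "inv_step f N p p'"
  shows "inv_step f (M \<union> N) p p'"
proof -
  obtain l0 q0 where e: "(l0, q0) \<in> N"
    "\<forall>(l, q)\<in>N. addr_inv (f l) q p' = addr_inv (f l) q p + (if (l, q) = (l0, q0) then 1 else 0)"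
    using assms(2) by (auto simp: inv_step_def)
  text \<open>The incremented node cannot lie in \<open>M\<close>, where nothing changes.\<close>
  then have "(l0, q0) \<notin> M"
    using assms(1) by (fastforce simp: inv_same_def)
  then show ?thesis
    using assms(1) e unfolding inv_step_def inv_same_def by (intro bexI[of _ "(l0, q0)"]) fastforce+
qed

lemma inv_step_Cons:
  assumes "inv_step f N r r'"
  shows "inv_step f ((\<lambda>(l, q). (l, j # q)) ` N) (j # r) (j # r')"
proof -
  obtain l0 q0 where e: "(l0, q0) \<in> N"
    "\<forall>(l, q)\<in>N. addr_inv (f l) q r' = addr_inv (f l) q r + (if (l, q) = (l0, q0) then 1 else 0)"
    using assms by (auto simp: inv_step_def)
  then show ?thesis
    unfolding inv_step_def by (intro bexI[of _ "(l0, j # q0)"]) fastforce+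
qed

lemma inv_step_Node:
  assumes "forest_step f 0 ts p p'"
  shows "inv_step f (set (nodes (Node i ts))) p p'"
proof -
  let ?N = "set (nodesl 0 ts)"
  have N: "set (nodes (Node i ts)) = {(i, [])} \<union> ?N"
    by simp
  from assms obtain c r c' r' where p: "p = c # r" "p' = c' # r'"
    and "c' = c \<and> inv_step f ?N p p' \<or> c' = Suc c \<and> inv_same f ?N p p'"
    by (auto simp: forest_step_def)
  then consider "c' = c" "inv_step f ?N p p'" | "c' = Suc c" "inv_same f ?N p p'"
    by blast
  then show ?thesis
  proof cases
    case 1
    then show ?thesis
      unfolding N using p by (intro inv_step_Un) (auto simp: inv_same_def)
  next
    case 2
    have "(i, []) \<notin> ?N"
      using in_set_nodeslD by blast
    then show ?thesis
      using 2 p unfolding N inv_step_def inv_same_def by (intro bexI[of _ "(i, [])"]) auto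
  qed
qed

lemma forest_step_Cons_head:
  assumes "inv_step f (set (nodes t)) r r'"
  shows "forest_step f j (t # ts) (j # r) (j # r')"
proof -
  have "inv_same f (set (nodesl (Suc j) ts)) (j # r) (j # r')"
    by (auto simp: inv_same_def addr_inv_Cons_less dest!: in_set_nodeslD)
  then have "inv_step f (set (nodesl j (t # ts))) (j # r) (j # r')"
    unfolding set_nodesl_Cons using inv_step_Un inv_step_Cons[OF assms] Un_commute by metis
  then show ?thesis
    by (auto simp: forest_step_def)
qed

lemma forest_step_Cons_tail:
  assumes "forest_step f (Suc j) ts p p'"
  shows "forest_step f j (t # ts) p p'"
proof -
  let ?N = "set (nodesl (Suc j) ts)"
  obtain c r c' r' where p: "p = c # r" "p' = c' # r'" "Suc j \<le> c"
    and step: "c' = c \<and> inv_step f ?N p p' \<or> c' = Suc c \<and> inv_same f ?N p p'"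
    using assms by (auto simp: forest_step_def)
  have "inv_same f ((\<lambda>(l, q). (l, j # q)) ` set (nodes t)) p p'"
    using p step by (auto simp: inv_same_def addr_inv_Cons_greater)
  with step have "c' = c \<and> inv_step f (set (nodesl j (t # ts))) p p' \<or>
      c' = Suc c \<and> inv_same f (set (nodesl j (t # ts))) p p'"
    unfolding set_nodesl_Cons using inv_step_Un by auto
  then show ?thesis
    using p by (auto simp: forest_step_def)
qed

lemma forest_step_Cons_junction:
  assumes "has_arity f t" "has_arity f u"
  shows "forest_step f j (t # u # ts) (j # last (leaves t)) (Suc j # hd (leaves u))"
proof -
  have t: "\<forall>(l, q)\<in>set (nodes t). addr_inv (f l) q (last (leaves t)) = f l"
    and u: "\<forall>(l, q)\<in>set (nodes u). addr_inv (f l) q (hd (leaves u)) = 0"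
    using leaves_hd_last(1) assms by blast+
  have "addr_inv (f l) q (Suc j # hd (leaves u)) = addr_inv (f l) q (j # last (leaves t))"
    if "(l, q) \<in> set (nodesl j (t # u # ts))" for l q
  proof -
    from that consider (t) q' where "q = j # q'" "(l, q') \<in> set (nodes t)"
      | (u) q' where "q = Suc j # q'" "(l, q') \<in> set (nodes u)"
      | (ts) "(l, q) \<in> set (nodesl (Suc (Suc j)) ts)"
      by auto
    then show ?thesis
    proof cases
      case ts
      then show ?thesis using in_set_nodeslD[OF ts] by (auto simp: addr_inv_Cons_less)
    qed (use t u in \<open>auto simp: addr_inv_Cons_less addr_inv_Cons_greater\<close>)
  qed
  then have "inv_same f (set (nodesl j (t # u # ts))) (j # last (leaves t)) (Suc j # hd (leaves u))"
    unfolding inv_same_def by blast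
  then show ?thesis
    unfolding forest_step_def by blast
qed

lemma successively_inv_step_leaves:
  shows "has_arity f T \<Longrightarrow> successively (inv_step f (set (nodes T))) (leaves T)"
    and "\<forall>t\<in>set ts. has_arity f t \<Longrightarrow> successively (forest_step f j ts) (leavesl j ts)"
proof (induction T and j ts rule: nodes_nodesl.induct)
  case (2 i ts)
  then have "successively (forest_step f 0 ts) (leavesl 0 ts)"
    by simp
  then show ?case
    unfolding leaves.simps by (elim successively_mono) (erule inv_step_Node)
next
  case (4 j t ts)
  have head: "successively (forest_step f j (t # ts)) (map (Cons j) (leaves t))"
    using 4 unfolding successively_map by (auto elim!: successively_mono intro: forest_step_Cons_head)
  have tail: "successively (forest_step f j (t # ts)) (leavesl (Suc j) ts)"
    using 4 by (auto elim!: successively_mono intro: forest_step_Cons_tail)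
  have "forest_step f j (t # ts) (last (map (Cons j) (leaves t))) (hd (leavesl (Suc j) ts))"
    if ne: "leavesl (Suc j) ts \<noteq> []"
  proof -
    obtain u ts' where ts: "ts = u # ts'"
      using ne by (cases ts) auto
    have "leaves t \<noteq> []" "leaves u \<noteq> []"
      using 4(3) ts leaves_not_Nil by auto
    then show ?thesis
      using forest_step_Cons_junction 4(3) ts by (simp add: last_map hd_map)
  qed
  then show ?case
    using head tail unfolding leavesl.simps successively_append_iff by blast
qed auto

lemma leaves_diverge_at_node:
  assumes "p \<in> set (leaves T)" "p' \<in> set (leaves T)" "p \<noteq> p'"
  shows "\<exists>l q c c' r r'. (l, q) \<in> set (nodes T) \<and> p = q @ c # r \<and> p' = q @ c' # r' \<and> c \<noteq> c'"
  using assms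
proof (induction T arbitrary: p p')
  case (Node i ts)
  then obtain c r c' r' where p: "p = c # r" "p' = c' # r'" "c < length ts" "r \<in> set (leaves (ts ! c))"
    "r' \<in> set (leaves (ts ! c'))"
    by (auto simp: set_leavesl)
  show ?case
  proof (cases "c = c'")
    case True
    then have "r \<noteq> r'" using Node.prems p by simp
    moreover have "ts ! c \<in> set ts"
      using p by simp
    ultimately obtain l q d d' v v' where lq:
      "(l, q) \<in> set (nodes (ts ! c))" "r = q @ d # v" "r' = q @ d' # v'" "d \<noteq> d'"
      using Node.IH p True by blast
    have "(l, c # q) \<in> set (nodes (Node i ts))"
      using lq(1) p(3) by (simp add: set_nodesl)
    then show ?thesis
      using lq p True by (metis append_Cons)
  next
    case False
    then show ?thesis
      using p by (intro exI[of _ i] exI[of _ "[]"] exI[of _ c] exI[of _ c'] exI[of _ r] exI[of _ r']) simp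
  qed
qed simp

section \<open>Relabelling and grafting\<close>

fun relabel :: "(nat \<Rightarrow> nat) \<Rightarrow> ptree \<Rightarrow> ptree" where
  "relabel g Leaf = Leaf"
| "relabel g (Node i ts) = Node (g i) (map (relabel g) ts)"

lemma nodes_relabel:
  shows "nodes (relabel g T) = map (\<lambda>(l, q). (g l, q)) (nodes T)"
    and "nodesl j (map (relabel g) ts) = map (\<lambda>(l, q). (g l, q)) (nodesl j ts)"
  by (induction T and j ts rule: nodes_nodesl.induct) (auto simp: case_prod_beta)

lemma leaves_relabel:
  shows "leaves (relabel g T) = leaves T"
    and "leavesl j (map (relabel g) ts) = leavesl j ts"
  by (induction T and j ts rule: nodes_nodesl.induct) auto

lemma labels_relabel: "labels (relabel g T) = map g (labels T)"
  by (simp add: labels_def nodes_relabel(1) case_prod_beta)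

lemma relabel_relabel: "relabel g (relabel h T) = relabel (g \<circ> h) T"
  by (induction T) auto

lemma relabel_ident: "\<forall>l\<in>set (labels T). g l = l \<Longrightarrow> relabel g T = T"
proof (induction T)
  case (Node i ts)
  then have "map (relabel g) ts = ts"
    by (auto simp: set_labels_Node intro: map_idI)
  with Node show ?case
    by (simp add: set_labels_Node)
qed simp

lemma sdec_shape_relabel_Suc:
  "\<forall>l\<in>set (labels T). 1 \<le> l \<Longrightarrow> sdec_shape (x # s) (relabel Suc T) = sdec_shape s T"
proof (induction T)
  case (Node i ts)
  then have "sval (x # s) (Suc i) = sval s i"
    by (simp add: set_labels_Node sval_def nth_Cons')
  with Node show ?case
    by (auto simp: set_labels_Node labels_relabel)
qed simp

fun graft :: "nat list \<Rightarrow> ptree \<Rightarrow> ptree \<Rightarrow> ptree" where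
  "graft [] X T = X"
| "graft (c # p) X Leaf = Leaf"
| "graft (c # p) X (Node i ts) = Node i (ts[c := graft p X (ts ! c)])"

fun subtree :: "ptree \<Rightarrow> nat list \<Rightarrow> ptree" where
  "subtree T [] = T"
| "subtree Leaf (c # p) = Leaf"
| "subtree (Node i ts) (c # p) = subtree (ts ! c) p"

lemma set_labels_graft: "set (labels (graft p X T)) \<subseteq> set (labels T) \<union> set (labels X)"
proof (induction p X T rule: graft.induct)
  case (3 c p X i ts)
  have "set (ts[c := graft p X (ts ! c)]) \<subseteq> insert (graft p X (ts ! c)) (set ts)"
    by (rule set_update_subset_insert)
  then show ?case
    using 3 by (cases "c < length ts") (fastforce simp: set_labels_Node list_update_beyond)+
qed auto

lemma sdec_shape_graft:
  assumes "sdec_shape s T" "sdec_shape s X" "\<forall>l\<in>set (labels X). \<forall>l'\<in>set (labels T). l < l'"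
  shows "sdec_shape s (graft p X T)"
  using assms
proof (induction p X T rule: graft.induct)
  case (3 c p X i ts)
  show ?case
  proof (cases "c < length ts")
    case True
    let ?u = "graft p X (ts ! c)"
    have tc: "ts ! c \<in> set ts"
      using True by simp
    then have "sdec_shape s ?u"
      using 3 by (auto simp: set_labels_Node)
    moreover have "\<forall>l\<in>set (labels ?u). l < i"
      using set_labels_graft[of p X "ts ! c"] 3(2,4) tc by (fastforce simp: set_labels_Node)
    moreover have "set (ts[c := ?u]) \<subseteq> insert ?u (set ts)"
      by (rule set_update_subset_insert)
    ultimately show ?thesis
      using 3(2) by auto
  next
    case False
    then have "ts[c := graft p X (ts ! c)] = ts"
      by (simp add: list_update_beyond)
    with 3 show ?thesis
      by simp
  qed
qed auto

lemma set_nodes_graft: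
  assumes "p \<in> set (leaves T)"
  shows "set (nodes (graft p X T)) = set (nodes T) \<union> (\<lambda>(l, q). (l, p @ q)) ` set (nodes X)"
  using assms
proof (induction p X T rule: graft.induct)
  case (1 X T)
  then have "T = Leaf"
    by (cases T) (auto simp: set_leavesl)
  then show ?case
    by (simp add: image_def)
next
  case (3 c p X i ts)
  then have c: "c < length ts" and "p \<in> set (leaves (ts ! c))"
    by (auto simp: set_leavesl)
  with 3 have IH: "set (nodes (graft p X (ts ! c))) = set (nodes (ts ! c)) \<union> (\<lambda>(l, q). (l, p @ q)) ` set (nodes X)"
    by blast
  show ?case
  proof (intro set_eqI iffI)
    fix x assume "x \<in> set (nodes (graft (c # p) X (Node i ts)))"
    then show "x \<in> set (nodes (Node i ts)) \<union> (\<lambda>(l, q). (l, (c # p) @ q)) ` set (nodes X)"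
      unfolding graft.simps set_nodes_Node using c IH
      by (auto simp: nth_list_update split: if_splits)
  next
    fix x assume "x \<in> set (nodes (Node i ts)) \<union> (\<lambda>(l, q). (l, (c # p) @ q)) ` set (nodes X)"
    let ?ts = "ts[c := graft p X (ts ! c)]"
    from \<open>x \<in> _\<close> consider "x = (i, [])"
      | l c' q where "x = (l, c' # q)" "c' < length ts" "(l, q) \<in> set (nodes (ts ! c'))"
      | l q where "x = (l, c # p @ q)" "(l, q) \<in> set (nodes X)"
      unfolding set_nodes_Node by auto
    then show "x \<in> set (nodes (graft (c # p) X (Node i ts)))"
    proof cases
      case (2 l c' q)
      then have "(l, q) \<in> set (nodes (?ts ! c'))"
        using IH c by (cases "c' = c") auto
      then show ?thesis
        using 2 by (simp add: set_nodesl)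
    next
      case (3 l q)
      then have "(l, p @ q) \<in> set (nodes (?ts ! c))"
        using IH c by auto
      then show ?thesis
        using 3 c by (simp add: set_nodesl)
    qed simp
  qed
qed simp

lemma length_nodesl: "length (nodesl j ts) = sum_list (map (\<lambda>t. length (nodes t)) ts)"
  by (induction ts arbitrary: j) auto

lemma length_nodes_graft:
  assumes "p \<in> set (leaves T)"
  shows "length (nodes (graft p X T)) = length (nodes T) + length (nodes X)"
  using assms
proof (induction p X T rule: graft.induct)
  case (1 X T)
  then show ?case
    by (cases T) (auto simp: set_leavesl)
next
  case (3 c p X i ts)
  then have c: "c < length ts" and "p \<in> set (leaves (ts ! c))"
    by (auto simp: set_leavesl)
  with 3 have IH: "length (nodes (graft p X (ts ! c))) = length (nodes (ts ! c)) + length (nodes X)"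
    by blast
  have "length (nodes (ts ! c)) \<le> sum_list (map (\<lambda>t. length (nodes t)) ts)"
    using c elem_le_sum_list[of c "map (\<lambda>t. length (nodes t)) ts"] by simp
  then show ?case
    using c IH by (simp add: length_nodesl map_update sum_list_update)
qed simp

lemma in_set_nodes_Nil: "(l, []) \<in> set (nodes T) \<longleftrightarrow> (\<exists>ts. T = Node l ts)"
  by (cases T) (auto dest: in_set_nodeslD)

lemma in_set_nodes_Cons:
  "(l, c # p) \<in> set (nodes T) \<longleftrightarrow> (\<exists>i ts. T = Node i ts \<and> c < length ts \<and> (l, p) \<in> set (nodes (ts ! c)))"
  by (cases T) (auto simp: set_nodesl)

lemma subtree_at_node: "(l, p) \<in> set (nodes T) \<Longrightarrow> \<exists>ts. subtree T p = Node l ts"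
  by (induction p arbitrary: T) (auto simp: in_set_nodes_Nil in_set_nodes_Cons)

lemma graft_subtree: "(l, p) \<in> set (nodes T) \<Longrightarrow> graft p (subtree T p) (graft p Leaf T) = T"
  by (induction p arbitrary: T) (auto simp: in_set_nodes_Nil in_set_nodes_Cons)

lemma in_leaves_graft_Leaf: "(l, p) \<in> set (nodes T) \<Longrightarrow> p \<in> set (leaves (graft p Leaf T))"
  by (induction p arbitrary: T) (auto simp: in_set_nodes_Nil in_set_nodes_Cons set_leavesl)

lemma sdec_shape_subtree: "(l, p) \<in> set (nodes T) \<Longrightarrow> sdec_shape s T \<Longrightarrow> sdec_shape s (subtree T p)"
  by (induction p arbitrary: T) (auto simp: in_set_nodes_Nil in_set_nodes_Cons)

lemma set_labels_subtree: "(l, p) \<in> set (nodes T) \<Longrightarrow> set (labels (subtree T p)) \<subseteq> set (labels T)"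
  by (induction p arbitrary: T) (fastforce simp: in_set_nodes_Nil in_set_nodes_Cons set_labels_Node)+

section \<open>Decreasing trees as grafted smaller ones\<close>

lemma set_labels_s_decreasing_tree: "s_decreasing_tree s T \<Longrightarrow> set (labels T) = {1..length s}"
  by (simp add: s_decreasing_tree_def)

lemma length_labels_s_decreasing_tree: "s_decreasing_tree s T \<Longrightarrow> length (labels T) = length s"
  unfolding s_decreasing_tree_def using distinct_card by fastforce

lemma pos_eqI: "distinct (labels T) \<Longrightarrow> (a, q) \<in> set (nodes T) \<Longrightarrow> pos T a = q"
  unfolding pos_def labels_def by (rule the_equality) (auto intro: eq_key_imp_eq_value)

lemma pos_in_nodes:
  assumes "s_decreasing_tree s T" "a \<in> {1..length s}"
  shows "(a, pos T a) \<in> set (nodes T)"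
proof -
  obtain q where q: "(a, q) \<in> set (nodes T)"
    using assms set_labels_s_decreasing_tree by (fastforce simp: labels_def)
  with assms(1) have "pos T a = q"
    by (auto simp: s_decreasing_tree_def intro: pos_eqI)
  with q show ?thesis
    by simp
qed

lemma label_in_range:
  "s_decreasing_tree s T \<Longrightarrow> (l, q) \<in> set (nodes T) \<Longrightarrow> l \<in> {1..length s}"
  using set_labels_s_decreasing_tree by (force simp: labels_def)

lemma s_decreasing_tree_Nil: "s_decreasing_tree [] T \<longleftrightarrow> T = Leaf"
proof
  assume T: "s_decreasing_tree [] T"
  show "T = Leaf"
  proof (cases T)
    case (Node i ts)
    then have "i \<in> set (labels T)"
      by (simp add: set_labels_Node)
    with T show ?thesis
      using set_labels_s_decreasing_tree by fastforce
  qed simp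
qed (simp add: s_decreasing_tree_def)

definition leaf_inv :: "nat list \<Rightarrow> ptree \<Rightarrow> nat list \<Rightarrow> nat \<Rightarrow> nat" where
  "leaf_inv s t p b = addr_inv (sval s b) (pos t b) p"

lemma leaves_s_decreasing_tree_not_Nil: "s_decreasing_tree s t \<Longrightarrow> leaves t \<noteq> []"
  by (auto simp: s_decreasing_tree_def dest: sdec_shape_has_arity leaves_not_Nil)

lemma leaf_inv_hd_last:
  assumes "s_decreasing_tree s t" "b \<in> {1..length s}"
  shows "leaf_inv s t (hd (leaves t)) b = 0" and "leaf_inv s t (last (leaves t)) b = sval s b"
  using leaves_hd_last(1)[of "sval s" t] pos_in_nodes[OF assms] assms(1)
  by (auto simp: leaf_inv_def s_decreasing_tree_def dest: sdec_shape_has_arity)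

lemma leaf_inv_step:
  assumes t: "s_decreasing_tree s t" and step: "inv_step (sval s) (set (nodes t)) p p'"
  shows "\<exists>b0\<in>{1..length s}. \<forall>b\<in>{1..length s}. leaf_inv s t p' b = leaf_inv s t p b + (if b = b0 then 1 else 0)"
proof -
  obtain b0 q0 where e: "(b0, q0) \<in> set (nodes t)"
    "\<forall>(l, q)\<in>set (nodes t). addr_inv (sval s l) q p' = addr_inv (sval s l) q p + (if (l, q) = (b0, q0) then 1 else 0)"
    using step by (auto simp: inv_step_def)
  have "pos t b0 = q0"
    using t e(1) by (auto simp: s_decreasing_tree_def intro: pos_eqI)
  then have "leaf_inv s t p' b = leaf_inv s t p b + (if b = b0 then 1 else 0)" if "b \<in> {1..length s}" for b
    using e(2) pos_in_nodes[OF t that] by (fastforce simp: leaf_inv_def)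
  then show ?thesis
    using label_in_range[OF t e(1)] by blast
qed

lemma leaf_inv_inj:
  assumes t: "s_decreasing_tree s t" and p: "p \<in> set (leaves t)" "p' \<in> set (leaves t)"
    and eq: "\<forall>b\<in>{1..length s}. leaf_inv s t p b = leaf_inv s t p' b"
  shows "p = p'"
proof (rule ccontr)
  assume "p \<noteq> p'"
  then obtain l q c c' r r' where lq: "(l, q) \<in> set (nodes t)" "p = q @ c # r" "p' = q @ c' # r'" "c \<noteq> c'"
    using leaves_diverge_at_node[OF p] by blast
  have "pos t l = q"
    using t lq(1) by (auto simp: s_decreasing_tree_def intro: pos_eqI)
  then have "leaf_inv s t p l \<noteq> leaf_inv s t p' l"
    using lq by (simp add: leaf_inv_def)
  with eq label_in_range[OF t lq(1)] show False
    by blast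
qed

definition cherry :: "nat \<Rightarrow> ptree" where
  "cherry x = Node 1 (replicate (Suc x) Leaf)"

definition graft_cherry :: "nat \<Rightarrow> ptree \<Rightarrow> nat list \<Rightarrow> ptree" where
  "graft_cherry x t p = graft p (cherry x) (relabel Suc t)"

lemma nodes_cherry: "nodes (cherry x) = [(1, [])]"
proof -
  have "nodesl j (replicate k Leaf) = []" for j k
    by (induction k arbitrary: j) auto
  then show ?thesis
    by (simp add: cherry_def)
qed

lemma set_nodes_graft_cherry:
  assumes "p \<in> set (leaves t)"
  shows "set (nodes (graft_cherry x t p)) = (\<lambda>(l, q). (Suc l, q)) ` set (nodes t) \<union> {(1, p)}"
  using set_nodes_graft[of p "relabel Suc t" "cherry x"] assms
  by (simp add: graft_cherry_def nodes_relabel(1) leaves_relabel(1) nodes_cherry)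

lemma s_decreasing_tree_graft_cherry:
  assumes t: "s_decreasing_tree s t" and p: "p \<in> set (leaves t)"
  shows "s_decreasing_tree (x # s) (graft_cherry x t p)"
proof -
  have lt: "set (labels t) = {1..length s}"
    using t by (rule set_labels_s_decreasing_tree)
  have "sdec_shape (x # s) (relabel Suc t)"
    using sdec_shape_relabel_Suc[of t x s] t lt by (simp add: s_decreasing_tree_def)
  moreover have "sdec_shape (x # s) (cherry x)"
    by (simp add: cherry_def sval_def)
  ultimately have shape: "sdec_shape (x # s) (graft_cherry x t p)"
    unfolding graft_cherry_def using lt
    by (intro sdec_shape_graft) (auto simp: labels_relabel, simp add: labels_def nodes_cherry)
  have "length (labels (graft_cherry x t p)) = Suc (length s)"
    using length_nodes_graft[of p "relabel Suc t" "cherry x"] p length_labels_s_decreasing_tree[OF t]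
    by (simp add: graft_cherry_def labels_def nodes_relabel(1) leaves_relabel(1) nodes_cherry)
  moreover have "set (labels (graft_cherry x t p)) = Suc ` set (labels t) \<union> {1}"
    unfolding labels_def set_map set_nodes_graft_cherry[OF p] by force
  moreover have "Suc ` {1..length s} \<union> {1} = {1..length (x # s)}"
    by (auto simp: image_def) (metis Suc_le_D Suc_le_mono atLeastAtMost_iff le_zero_eq not_less_eq_eq)
  ultimately show ?thesis
    using shape lt by (simp add: s_decreasing_tree_def card_distinct)
qed

lemma pos_graft_cherry:
  assumes t: "s_decreasing_tree s t" and p: "p \<in> set (leaves t)"
  shows "a \<in> {1..length s} \<Longrightarrow> pos (graft_cherry x t p) (Suc a) = pos t a"
    and "pos (graft_cherry x t p) 1 = p"
proof -
  have d: "distinct (labels (graft_cherry x t p))"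
    using s_decreasing_tree_graft_cherry[OF t p] by (simp add: s_decreasing_tree_def)
  show "a \<in> {1..length s} \<Longrightarrow> pos (graft_cherry x t p) (Suc a) = pos t a"
    using pos_in_nodes[OF t] set_nodes_graft_cherry[OF p] by (intro pos_eqI[OF d]) force
  show "pos (graft_cherry x t p) 1 = p"
    using set_nodes_graft_cherry[OF p] by (intro pos_eqI[OF d]) force
qed

lemma sval_Cons_Suc: "1 \<le> b \<Longrightarrow> sval (x # s) (Suc b) = sval s b"
  by (simp add: sval_def nth_Cons')

lemma tree_inv_graft_cherry_Suc:
  assumes "s_decreasing_tree s t" "p \<in> set (leaves t)" "1 \<le> a" "a < b" "b \<le> length s"
  shows "tree_inv (x # s) (graft_cherry x t p) (Suc b) (Suc a) = tree_inv s t b a"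
  using assms pos_graft_cherry[OF assms(1,2)] sval_Cons_Suc[of b x s]
  by (simp add: tree_inv_eq_addr_inv)

lemma tree_inv_graft_cherry_1:
  assumes "s_decreasing_tree s t" "p \<in> set (leaves t)" "b \<in> {1..length s}"
  shows "tree_inv (x # s) (graft_cherry x t p) (Suc b) 1 = leaf_inv s t p b"
  using assms pos_graft_cherry[OF assms(1,2)] sval_Cons_Suc[of b x s]
  by (simp add: tree_inv_eq_addr_inv leaf_inv_def)

lemma subtree_label_1:
  assumes T: "s_decreasing_tree (x # s) T" and p: "(1, p) \<in> set (nodes T)"
  shows "subtree T p = cherry x"
proof -
  obtain ts where ts: "subtree T p = Node 1 ts"
    using subtree_at_node[OF p] by blast
  have shape: "sdec_shape (x # s) (Node 1 ts)"
    using sdec_shape_subtree[OF p] T ts by (fastforce simp: s_decreasing_tree_def)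
  have "set (labels (Node 1 ts)) \<subseteq> {1..Suc (length s)}"
    using set_labels_subtree[OF p] set_labels_s_decreasing_tree[OF T] ts by simp
  then have "u = Leaf" if "u \<in> set ts" for u
    using that shape by (cases u) (fastforce simp: set_labels_Node)+
  moreover have "length ts = Suc x"
    using shape by (simp add: sval_def)
  ultimately have "ts = replicate (Suc x) Leaf"
    by (metis replicate_length_same)
  then show ?thesis
    using ts by (simp add: cherry_def)
qed

lemma labels_prune_label_1:
  assumes T: "s_decreasing_tree (x # s) T" and p: "(1, p) \<in> set (nodes T)"
  shows "distinct (labels (graft p Leaf T))" and "set (labels (graft p Leaf T)) = {2..Suc (length s)}"
proof -
  let ?T0 = "graft p Leaf T"
  have T: "T = graft p (cherry x) ?T0"
    using graft_subtree[OF p] subtree_label_1[OF T p] by simp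
  note nodes = set_nodes_graft[OF in_leaves_graft_Leaf[OF p], of "cherry x", folded T]
    length_nodes_graft[OF in_leaves_graft_Leaf[OF p], of "cherry x", folded T]
  have len: "length (labels ?T0) = length s"
    using nodes(2) length_labels_s_decreasing_tree[OF assms(1)] by (simp add: labels_def nodes_cherry)
  have set: "insert 1 (set (labels ?T0)) = {1..Suc (length s)}"
    using nodes(1) set_labels_s_decreasing_tree[OF assms(1)] by (auto simp: labels_def nodes_cherry)
  have "{2..Suc (length s)} \<subseteq> set (labels ?T0)"
  proof
    fix y assume "y \<in> {2..Suc (length s)}"
    then have "y \<in> insert 1 (set (labels ?T0))" "y \<noteq> 1"
      unfolding set by auto
    then show "y \<in> set (labels ?T0)"
      by simp
  qed
  moreover have "card (set (labels ?T0)) \<le> length s"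
    using card_length[of "labels ?T0"] len by simp
  ultimately show "set (labels ?T0) = {2..Suc (length s)}"
    using set by (intro card_seteq[symmetric]) auto
  then show "distinct (labels ?T0)"
    using len by (intro card_distinct) simp
qed

lemma graft_cherry_surj:
  assumes T: "s_decreasing_tree (x # s) T"
  obtains t p where "s_decreasing_tree s t" "p \<in> set (leaves t)" "T = graft_cherry x t p"
proof -
  obtain p where p: "(1, p) \<in> set (nodes T)"
    using set_labels_s_decreasing_tree[OF T] by (force simp: labels_def)
  let ?T0 = "graft p Leaf T"
  define t where "t = relabel (\<lambda>i. i - 1) ?T0"
  note labels0 = labels_prune_label_1[OF T p]
  have shift: "relabel Suc t = ?T0"
    unfolding t_def relabel_relabel using labels0(2) by (intro relabel_ident) auto
  have labels: "set (labels t) = {1..length s}"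
  proof -
    have "(\<lambda>i. i - 1) ` {2..Suc (length s)} = {1..length s}"
    proof -
      have "{2..Suc (length s)} = Suc ` {1..length s}"
        by (simp add: image_Suc_atLeastAtMost)
      then show ?thesis
        by (simp only: image_image) simp
    qed
    then show ?thesis
      using labels0(2) by (simp add: t_def labels_relabel)
  qed
  moreover have "distinct (labels t)"
    using labels0 by (auto simp: t_def labels_relabel distinct_map inj_on_def)
  moreover have "sdec_shape s t"
  proof -
    have "sdec_shape (x # s) ?T0"
      using T by (intro sdec_shape_graft) (auto simp: s_decreasing_tree_def)
    then show ?thesis
      using sdec_shape_relabel_Suc[of t x s] labels shift by simp
  qed
  ultimately have "s_decreasing_tree s t"
    by (simp add: s_decreasing_tree_def)
  moreover have "p \<in> set (leaves t)"
    using in_leaves_graft_Leaf[OF p] leaves_relabel(1)[of Suc t] shift by simp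
  moreover have "T = graft_cherry x t p"
    using graft_subtree[OF p] subtree_label_1[OF T p] shift by (simp add: graft_cherry_def)
  ultimately show ?thesis
    using that by blast
qed

lemma s_decreasing_tree_eqI:
  assumes "s_decreasing_tree s T" "s_decreasing_tree s U"
    and "\<forall>a b. 1 \<le> a \<and> a < b \<and> b \<le> length s \<longrightarrow> tree_inv s T b a = tree_inv s U b a"
  shows "T = U"
  using assms
proof (induction s arbitrary: T U)
  case Nil
  then show ?case
    by (simp add: s_decreasing_tree_Nil)
next
  case (Cons x s)
  obtain t p where t: "s_decreasing_tree s t" "p \<in> set (leaves t)" "T = graft_cherry x t p"
    using graft_cherry_surj[OF Cons.prems(1)] .
  obtain u q where u: "s_decreasing_tree s u" "q \<in> set (leaves u)" "U = graft_cherry x u q"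
    using graft_cherry_surj[OF Cons.prems(2)] .
  have "tree_inv s t b a = tree_inv s u b a" if ab: "1 \<le> a" "a < b" "b \<le> length s" for a b
  proof -
    have "tree_inv s t b a = tree_inv (x # s) T (Suc b) (Suc a)"
      using tree_inv_graft_cherry_Suc[OF t(1,2) ab] t(3) by simp
    also have "\<dots> = tree_inv (x # s) U (Suc b) (Suc a)"
      using Cons.prems(3) ab by simp
    also have "\<dots> = tree_inv s u b a"
      using tree_inv_graft_cherry_Suc[OF u(1,2) ab] u(3) by simp
    finally show ?thesis .
  qed
  then have tu: "t = u"
    using Cons.IH[OF t(1) u(1)] by blast
  have "leaf_inv s t p b = leaf_inv s t q b" if b: "b \<in> {1..length s}" for b
  proof -
    have "leaf_inv s t p b = tree_inv (x # s) T (Suc b) 1"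
      using tree_inv_graft_cherry_1[OF t(1,2) b] t(3) by simp
    also have "\<dots> = tree_inv (x # s) U (Suc b) 1"
      using Cons.prems(3) b by simp
    also have "\<dots> = leaf_inv s t q b"
      using tree_inv_graft_cherry_1[OF u(1,2) b] u(3) tu by simp
    finally show ?thesis .
  qed
  then have "p = q"
    using leaf_inv_inj[OF t(1,2)] u(2) tu by blast
  with t u tu show ?case
    by simp
qed

lemma graft_cherry_inj:
  assumes t: "s_decreasing_tree s t" "p \<in> set (leaves t)"
    and u: "s_decreasing_tree s u" "q \<in> set (leaves u)"
    and eq: "graft_cherry x t p = graft_cherry x u q"
  shows "t = u" and "p = q"
proof -
  have "tree_inv s t b a = tree_inv s u b a" if ab: "1 \<le> a" "a < b" "b \<le> length s" for a b
    using tree_inv_graft_cherry_Suc[OF t ab, of x] tree_inv_graft_cherry_Suc[OF u ab, of x] eq by simp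
  then show "t = u"
    using s_decreasing_tree_eqI[OF t(1) u(1)] by blast
  show "p = q"
    using pos_graft_cherry(2)[OF t, of x] pos_graft_cherry(2)[OF u, of x] eq by simp
qed

section \<open>Cover relations between grafted trees\<close>

lemma s_weak_le_graft_cherry_iff:
  assumes t: "s_decreasing_tree s t" "p \<in> set (leaves t)"
    and u: "s_decreasing_tree s u" "q \<in> set (leaves u)"
  shows "s_weak_le (x # s) (graft_cherry x t p) (graft_cherry x u q) \<longleftrightarrow>
    s_weak_le s t u \<and> (\<forall>b\<in>{1..length s}. leaf_inv s t p b \<le> leaf_inv s u q b)"
    (is "?le \<longleftrightarrow> _")
proof
  assume le: ?le
  have "tree_inv s t b a \<le> tree_inv s u b a" if ab: "1 \<le> a" "a < b" "b \<le> length s" for a b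
  proof -
    have "tree_inv (x # s) (graft_cherry x t p) (Suc b) (Suc a) \<le> tree_inv (x # s) (graft_cherry x u q) (Suc b) (Suc a)"
      using le ab unfolding s_weak_le_def by simp
    then show ?thesis
      using tree_inv_graft_cherry_Suc[OF t ab] tree_inv_graft_cherry_Suc[OF u ab] by simp
  qed
  moreover have "leaf_inv s t p b \<le> leaf_inv s u q b" if b: "b \<in> {1..length s}" for b
  proof -
    have "tree_inv (x # s) (graft_cherry x t p) (Suc b) 1 \<le> tree_inv (x # s) (graft_cherry x u q) (Suc b) 1"
      using le b unfolding s_weak_le_def by simp
    then show ?thesis
      using tree_inv_graft_cherry_1[OF t b] tree_inv_graft_cherry_1[OF u b] by simp
  qed
  ultimately show "s_weak_le s t u \<and> (\<forall>b\<in>{1..length s}. leaf_inv s t p b \<le> leaf_inv s u q b)"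
    unfolding s_weak_le_def by blast
next
  assume le: "s_weak_le s t u \<and> (\<forall>b\<in>{1..length s}. leaf_inv s t p b \<le> leaf_inv s u q b)"
  show ?le
    unfolding s_weak_le_def
  proof (intro allI impI)
    fix a b assume ab: "1 \<le> a \<and> a < b \<and> b \<le> length (x # s)"
    then obtain b' where b': "b = Suc b'" "b' \<in> {1..length s}"
      by (cases b) auto
    show "tree_inv (x # s) (graft_cherry x t p) b a \<le> tree_inv (x # s) (graft_cherry x u q) b a"
    proof (cases "a = 1")
      case True
      then show ?thesis
        using le b' tree_inv_graft_cherry_1[OF t b'(2)] tree_inv_graft_cherry_1[OF u b'(2)] by simp
    next
      case False
      then obtain a' where a': "a = Suc a'" "1 \<le> a'" "a' < b'"
        using ab b' by (cases a) auto
      then show ?thesis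
        using le b' tree_inv_graft_cherry_Suc[OF t a'(2,3)] tree_inv_graft_cherry_Suc[OF u a'(2,3)]
        unfolding s_weak_le_def by auto
    qed
  qed
qed

lemma s_weak_le_refl: "s_weak_le s T T"
  by (simp add: s_weak_le_def)

lemma s_weak_le_antisym:
  "s_decreasing_tree s T \<Longrightarrow> s_decreasing_tree s U \<Longrightarrow> s_weak_le s T U \<Longrightarrow> s_weak_le s U T \<Longrightarrow> T = U"
  by (rule s_decreasing_tree_eqI) (auto simp: s_weak_le_def intro: antisym)

lemma graft_cherry_between:
  assumes t: "s_decreasing_tree s t" "p \<in> set (leaves t)"
    and t': "s_decreasing_tree s t'" "p' \<in> set (leaves t')"
    and U: "s_decreasing_tree (x # s) U"
    and le: "s_weak_le (x # s) (graft_cherry x t p) U" "s_weak_le (x # s) U (graft_cherry x t' p')"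
  obtains u q where "s_decreasing_tree s u" "q \<in> set (leaves u)" "U = graft_cherry x u q"
    "s_weak_le s t u" "s_weak_le s u t'"
    "\<forall>b\<in>{1..length s}. leaf_inv s t p b \<le> leaf_inv s u q b \<and> leaf_inv s u q b \<le> leaf_inv s t' p' b"
proof -
  obtain u q where u: "s_decreasing_tree s u" "q \<in> set (leaves u)" "U = graft_cherry x u q"
    using graft_cherry_surj[OF U] .
  show ?thesis
    using that[OF u] le u(3) s_weak_le_graft_cherry_iff[OF t u(1,2)] s_weak_le_graft_cherry_iff[OF u(1,2) t'] by auto
qed

lemma s_weak_cover_graft_cherry_leaf_step:
  assumes t: "s_decreasing_tree s t" "p \<in> set (leaves t)" "p' \<in> set (leaves t)"
    and step: "inv_step (sval s) (set (nodes t)) p p'"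
  shows "s_weak_cover (x # s) (graft_cherry x t p) (graft_cherry x t p')"
proof -
  obtain b0 where b0: "b0 \<in> {1..length s}"
    "\<forall>b\<in>{1..length s}. leaf_inv s t p' b = leaf_inv s t p b + (if b = b0 then 1 else 0)"
    using leaf_inv_step[OF t(1) step] by blast
  have le: "s_weak_le (x # s) (graft_cherry x t p) (graft_cherry x t p')"
    using s_weak_le_graft_cherry_iff[OF t(1,2) t(1,3)] s_weak_le_refl b0(2) by fastforce
  have "p \<noteq> p'"
    using b0 by fastforce
  then have ne: "graft_cherry x t p \<noteq> graft_cherry x t p'"
    using graft_cherry_inj(2)[OF t(1,2) t(1,3)] by blast
  have "U = graft_cherry x t p \<or> U = graft_cherry x t p'"
    if U: "s_decreasing_tree (x # s) U" "s_weak_le (x # s) (graft_cherry x t p) U"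
      "s_weak_le (x # s) U (graft_cherry x t p')" for U
  proof -
    obtain u q where u: "s_decreasing_tree s u" "q \<in> set (leaves u)" "U = graft_cherry x u q"
      and tu: "s_weak_le s t u" "s_weak_le s u t"
      and q: "\<forall>b\<in>{1..length s}. leaf_inv s t p b \<le> leaf_inv s u q b \<and> leaf_inv s u q b \<le> leaf_inv s t p' b"
      using graft_cherry_between[OF t(1,2) t(1,3) U] .
    have "u = t"
      using s_weak_le_antisym[OF u(1) t(1) tu(2,1)] .
    with q have between: "leaf_inv s t p b \<le> leaf_inv s t q b" "leaf_inv s t q b \<le> leaf_inv s t p' b"
      if "b \<in> {1..length s}" for b
      using that by auto
    text \<open>The inversion vectors of \<open>p\<close> and \<open>p'\<close> differ in the entry \<open>b0\<close> only, and there by one.\<close>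
    have "q = p \<or> q = p'"
    proof (cases "leaf_inv s t q b0 = leaf_inv s t p b0")
      case True
      have "leaf_inv s t p b = leaf_inv s t q b" if "b \<in> {1..length s}" for b
        using True between[OF that] b0(2) that by (cases "b = b0") auto
      then show ?thesis
        using leaf_inv_inj[OF t(1,2)] u(2) \<open>u = t\<close> by blast
    next
      case False
      have "leaf_inv s t p' b = leaf_inv s t q b" if "b \<in> {1..length s}" for b
        using False between[OF that] between[OF b0(1)] b0 that by (cases "b = b0") auto
      then show ?thesis
        using leaf_inv_inj[OF t(1,3)] u(2) \<open>u = t\<close> by blast
    qed
    then show ?thesis
      using u(3) \<open>u = t\<close> by blast
  qed
  then show ?thesis
    unfolding s_weak_cover_def
    using s_decreasing_tree_graft_cherry[OF t(1,2)] s_decreasing_tree_graft_cherry[OF t(1,3)] le ne by blast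
qed

lemma s_weak_cover_graft_cherry_tree_step:
  assumes t: "s_decreasing_tree s t" "p \<in> set (leaves t)"
    and t': "s_decreasing_tree s t'" "p' \<in> set (leaves t')"
    and cover: "s_weak_cover s t t'"
    and eq: "\<forall>b\<in>{1..length s}. leaf_inv s t p b = leaf_inv s t' p' b"
  shows "s_weak_cover (x # s) (graft_cherry x t p) (graft_cherry x t' p')"
proof -
  have le: "s_weak_le (x # s) (graft_cherry x t p) (graft_cherry x t' p')"
    using s_weak_le_graft_cherry_iff[OF t t'] cover eq by (simp add: s_weak_cover_def)
  have ne: "graft_cherry x t p \<noteq> graft_cherry x t' p'"
    using graft_cherry_inj(1)[OF t t'] cover by (auto simp: s_weak_cover_def)
  have "U = graft_cherry x t p \<or> U = graft_cherry x t' p'"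
    if U: "s_decreasing_tree (x # s) U" "s_weak_le (x # s) (graft_cherry x t p) U"
      "s_weak_le (x # s) U (graft_cherry x t' p')" for U
  proof -
    obtain u q where u: "s_decreasing_tree s u" "q \<in> set (leaves u)" "U = graft_cherry x u q"
      and tu: "s_weak_le s t u" "s_weak_le s u t'"
      and q: "\<forall>b\<in>{1..length s}. leaf_inv s t p b \<le> leaf_inv s u q b \<and> leaf_inv s u q b \<le> leaf_inv s t' p' b"
      using graft_cherry_between[OF t t' U] .
    have q_eq: "\<forall>b\<in>{1..length s}. leaf_inv s u q b = leaf_inv s t p b"
      using q eq by (fastforce intro: antisym)
    have "u = t \<or> u = t'"
      using cover u(1) tu by (auto simp: s_weak_cover_def)
    then show ?thesis
    proof
      assume "u = t"
      then have "q = p"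
        using leaf_inv_inj[OF t(1), of q p] u(2) t(2) q_eq by simp
      with u(3) \<open>u = t\<close> show ?thesis
        by blast
    next
      assume "u = t'"
      then have "q = p'"
        using leaf_inv_inj[OF t'(1), of q p'] u(2) t'(2) q_eq eq by simp
      with u(3) \<open>u = t'\<close> show ?thesis
        by blast
    qed
  qed
  then show ?thesis
    unfolding s_weak_cover_def
    using s_decreasing_tree_graft_cherry[OF t] s_decreasing_tree_graft_cherry[OF t'] le ne by blast
qed

section \<open>The boustrophedon path\<close>

fun boustrophedon :: "bool \<Rightarrow> 'a list list \<Rightarrow> 'a list" where
  "boustrophedon d [] = []"
| "boustrophedon d (r # rs) = (if d then r else rev r) @ boustrophedon (\<not> d) rs"

lemma set_boustrophedon: "set (boustrophedon d rs) = set (concat rs)"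
  by (induction rs arbitrary: d) auto

lemma distinct_boustrophedon: "distinct (boustrophedon d rs) \<longleftrightarrow> distinct (concat rs)"
  by (induction rs arbitrary: d) (auto simp: set_boustrophedon)

lemma successively_boustrophedon:
  assumes sym: "\<And>a b. E a b \<Longrightarrow> E b a"
    and rows: "\<forall>r\<in>set rs. r \<noteq> [] \<and> successively E r"
    and ends: "successively (\<lambda>r r'. E (hd r) (hd r') \<and> E (last r) (last r')) rs"
  shows "successively E (boustrophedon d rs)"
  using rows ends
proof (induction rs arbitrary: d)
  case (Cons r rs)
  have "successively E (if d then r else rev r)"
    using Cons.prems(1) sym by (auto simp: successively_rev elim: successively_mono)
  moreover have "successively (\<lambda>r r'. E (hd r) (hd r') \<and> E (last r) (last r')) rs"
    using Cons.prems(2) by (auto simp: successively_Cons)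
  then have "successively E (boustrophedon (\<not> d) rs)"
    using Cons.IH Cons.prems(1) by simp
  moreover have "E (last (if d then r else rev r)) (hd (boustrophedon (\<not> d) rs))"
    if "rs = r' # rs'" for r' rs'
    using Cons.prems that by (auto simp: hd_rev last_rev)
  ultimately show ?case
    by (cases rs) (auto simp: successively_append_iff)
qed simp

lemma distinct_leaves:
  shows "distinct (leaves T)"
    and "distinct (leavesl j ts)"
proof (induction T and j ts rule: nodes_nodesl.induct)
  case (4 j t ts)
  then show ?case
    by (auto simp: distinct_map set_leavesl)
qed simp_all

abbreviation graft_cherry_row :: "nat \<Rightarrow> ptree \<Rightarrow> ptree list" where
  "graft_cherry_row x t \<equiv> map (graft_cherry x t) (leaves t)"

lemma successively_s_perm_edge_graft_cherry_row:
  assumes t: "s_decreasing_tree s t"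
  shows "successively (s_perm_edge (x # s)) (graft_cherry_row x t)"
proof -
  have "successively (inv_step (sval s) (set (nodes t))) (leaves t)"
    using t by (intro successively_inv_step_leaves(1) sdec_shape_has_arity) (simp add: s_decreasing_tree_def)
  then show ?thesis
    unfolding successively_map s_perm_edge_def
    by (elim successively_mono) (blast intro: s_weak_cover_graft_cherry_leaf_step[OF t])
qed

lemma s_perm_edge_graft_cherry_row_ends:
  assumes t: "s_decreasing_tree s t" and t': "s_decreasing_tree s t'" and edge: "s_perm_edge s t t'"
  shows "s_perm_edge (x # s) (hd (graft_cherry_row x t)) (hd (graft_cherry_row x t'))"
    and "s_perm_edge (x # s) (last (graft_cherry_row x t)) (last (graft_cherry_row x t'))"
proof -
  have ne: "leaves t \<noteq> []" "leaves t' \<noteq> []"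
    using t t' by (simp_all add: leaves_s_decreasing_tree_not_Nil)
  text \<open>The first leaves of \<open>t\<close> and \<open>t'\<close> have all inversions \<open>0\<close>, the last ones all maximal.\<close>
  have "s_perm_edge (x # s) (graft_cherry x t p) (graft_cherry x t' p')"
    if p: "p \<in> set (leaves t)" "p' \<in> set (leaves t')"
      and eq: "\<forall>b\<in>{1..length s}. leaf_inv s t p b = leaf_inv s t' p' b" for p p'
    using edge s_weak_cover_graft_cherry_tree_step[OF t p(1) t' p(2) _ eq]
      s_weak_cover_graft_cherry_tree_step[OF t' p(2) t p(1) _] eq
    unfolding s_perm_edge_def by auto
  then show "s_perm_edge (x # s) (hd (graft_cherry_row x t)) (hd (graft_cherry_row x t'))"
    and "s_perm_edge (x # s) (last (graft_cherry_row x t)) (last (graft_cherry_row x t'))"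
    using ne leaf_inv_hd_last[OF t] leaf_inv_hd_last[OF t'] by (simp_all add: hd_map last_map)
qed

lemma distinct_graft_cherry_rows:
  assumes "distinct L" and L: "\<forall>t\<in>set L. s_decreasing_tree s t"
  shows "distinct (concat (map (graft_cherry_row x) L))"
proof (rule distinct_concat)
  have "t = u" if "t \<in> set L" "u \<in> set L" "graft_cherry_row x t = graft_cherry_row x u" for t u
  proof -
    have "leaves t \<noteq> []" "leaves u \<noteq> []"
      using that L leaves_s_decreasing_tree_not_Nil by auto
    then have "graft_cherry x t (hd (leaves t)) = graft_cherry x u (hd (leaves u))"
      using that(3) by (metis hd_map)
    then show ?thesis
      using graft_cherry_inj(1) L that \<open>leaves t \<noteq> []\<close> \<open>leaves u \<noteq> []\<close> by (meson hd_in_set)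
  qed
  then show "distinct (map (graft_cherry_row x) L)"
    using assms(1) by (auto simp: distinct_map inj_on_def)
  show "distinct r" if "r \<in> set (map (graft_cherry_row x) L)" for r
    using that L graft_cherry_inj(2) by (auto simp: distinct_map inj_on_def distinct_leaves(1))
  show "set r \<inter> set r' = {}"
    if "r \<in> set (map (graft_cherry_row x) L)" "r' \<in> set (map (graft_cherry_row x) L)" "r \<noteq> r'" for r r'
    using that L graft_cherry_inj(1) by fastforce
qed

lemma s_permutahedron_hamiltonian_path:
  "\<exists>L. distinct L \<and> set L = {T. s_decreasing_tree s T} \<and> successively (s_perm_edge s) L"
proof (induction s)
  case Nil
  show ?case
    by (rule exI[of _ "[Leaf]"]) (simp add: s_decreasing_tree_Nil)
next
  case (Cons x s)
  then obtain L where L: "distinct L" "set L = {t. s_decreasing_tree s t}" "successively (s_perm_edge s) L"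
    by blast
  let ?rows = "map (graft_cherry_row x) L"
  have dec: "\<forall>t\<in>set L. s_decreasing_tree s t"
    using L(2) by simp
  have "distinct (boustrophedon True ?rows)"
    using distinct_graft_cherry_rows[OF L(1) dec] by (simp add: distinct_boustrophedon)
  moreover have "set (boustrophedon True ?rows) = {T. s_decreasing_tree (x # s) T}"
  proof -
    have "T \<in> set (concat ?rows)" if T: "s_decreasing_tree (x # s) T" for T
    proof -
      obtain t p where "s_decreasing_tree s t" "p \<in> set (leaves t)" "T = graft_cherry x t p"
        using graft_cherry_surj[OF T] .
      then show ?thesis
        using L(2) by auto
    qed
    then show ?thesis
      using dec by (auto simp: set_boustrophedon intro: s_decreasing_tree_graft_cherry)
  qed
  moreover have "successively (s_perm_edge (x # s)) (boustrophedon True ?rows)"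
  proof (rule successively_boustrophedon)
    show "s_perm_edge (x # s) T U \<Longrightarrow> s_perm_edge (x # s) U T" for T U
      by (auto simp: s_perm_edge_def)
    show "\<forall>r\<in>set ?rows. r \<noteq> [] \<and> successively (s_perm_edge (x # s)) r"
      using dec by (auto simp: leaves_s_decreasing_tree_not_Nil successively_s_perm_edge_graft_cherry_row)
    show "successively (\<lambda>r r'. s_perm_edge (x # s) (hd r) (hd r') \<and> s_perm_edge (x # s) (last r) (last r')) ?rows"
      unfolding successively_map using L(3)
      by (elim successively_mono) (use dec s_perm_edge_graft_cherry_row_ends in blast)
  qed
  ultimately show ?case
    by blast
qed

theorem theorem1:
  fixes s :: "nat list"
  assumes "\<forall>i \<in> set s. 0 < i"
  shows "\<exists>L. distinct L \<and> set L = {T. s_decreasing_tree s T} \<and>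
           (\<forall>i. Suc i < length L \<longrightarrow> s_perm_edge s (L ! i) (L ! Suc i))"
  using s_permutahedron_hamiltonian_path[of s] successively_nth by blast

end
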